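(* Let $E$ be a compact subset of $\mathbb{R}^2$. Then $E$ is purely unrectifiable if and only if $\lim_{\varepsilon \to 0} R_E(\varepsilon,r,M) = 0$ for all $r > 0$ and all $M > 0$.
   Context: A Lipschitz graph in $\mathbb{R}^2$ is a set $\Gamma = \{ x\omega_1 + F(x)\omega_2 : x \in \mathbb{R}\}$ where $\omega_1,\omega_2 \in S^1$ are orthonormal and $F:\mathbb{R}\to\mathbb{R}$ is Lipschitz. A set $E \subset \mathbb{R}^2$ is purely unrectifiable if for all orthonormal $\omega_1,\omega_2 \in S^1$ and all Lipschitz $F:\mathbb{R}\to\mathbb{R}$ one has $m(\{x \in \mathbb{R} : x\omega_1 + F(x)\omega_2 \in E\}) = 0$, where $m$ is Lebesgue measure on $\mathbb{R}$ (equivalently, $E\cap\Gamma$ has zero one-dimensional spherical (or Hausdorff) measure for every Lipschitz graph $\Gamma$). For $\varepsilon, r, M > 0$ the rectifiability constant is $$R_E(\varepsilon,r,M) = \sup \frac{m(\{x \in J : x\omega_1 + (F(x)+y)\omega_2 \in E \text{ for some } -\varepsilon \le y \le \varepsilon\})}{m(J)},$$ the supremum over all orthonormal $\omega_1,\omega_2 \in S^1$, all $F:\mathbb{R}\to\mathbb{R}$ with Lipschitz constant $\sup_{x\ne y}|F(x)-F(y)|/|x-y| \le M$, and all intervals $J \subset \mathbb{R}$ of length at least $r$. *)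

theory Defs
  imports "HOL-Analysis.Analysis"
begin

definition orthonormal2 :: "real^2 \<Rightarrow> real^2 \<Rightarrow> bool" where
  "orthonormal2 w1 w2 \<longleftrightarrow> norm w1 = 1 \<and> norm w2 = 1 \<and> inner w1 w2 = 0"

definition purely_unrectifiable :: "(real^2) set \<Rightarrow> bool" where
  "purely_unrectifiable E \<longleftrightarrow>
     (\<forall>w1 w2 (F::real \<Rightarrow> real) L. orthonormal2 w1 w2 \<and> L-lipschitz_on UNIV F \<longrightarrow>
        {x. x *\<^sub>R w1 + F x *\<^sub>R w2 \<in> E} \<in> null_sets lebesgue)"

definition rect_const :: "(real^2) set \<Rightarrow> real \<Rightarrow> real \<Rightarrow> real \<Rightarrow> real" where
  "rect_const E \<epsilon> r M =
     Sup {measure lebesgue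
            {x \<in> {a..b}. \<exists>y. -\<epsilon> \<le> y \<and> y \<le> \<epsilon> \<and> x *\<^sub>R w1 + (F x + y) *\<^sub>R w2 \<in> E}
          / (b - a)
         | w1 w2 F a b. orthonormal2 w1 w2 \<and> M-lipschitz_on UNIV F \<and> b - a \<ge> r}"

end

theory Submission
  imports Defs "HOL-Complex_Analysis.Great_Picard" (* for Arzela_Ascoli *)
begin

(* If E is not purely unrectifiable, some Lipschitz graph meets E in a set of positive measure
   inside an interval [-B, B] containing the projection of E; already the strips of height 0 over
   that interval bound R_E(eps, 2B, L + 1) from below independently of eps.

   Conversely, if R_E(eps_n, r, M) >= delta along eps_n -> 0, choose frames, M-Lipschitz functions
   and intervals whose strip sets A_n have measure >= delta r / 2. All A_n lie in [-B, B], so by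
   compactness of the frames and Arzela-Ascoli a subsequence of the data converges to a frame and
   an M-Lipschitz function G. A point lying in infinitely many A_n is then the parameter of a graph
   point of G in the closed set E. Hence limsup A_n, of measure >= delta r / 2, lies in a null set. *)

definition strip_hits ::
    "(real^2) set \<Rightarrow> real \<Rightarrow> real^2 \<Rightarrow> real^2 \<Rightarrow> (real \<Rightarrow> real) \<Rightarrow> real \<Rightarrow> real \<Rightarrow> real set" where
  "strip_hits E e w1 w2 F a b =
     {x \<in> {a..b}. \<exists>y. -e \<le> y \<and> y \<le> e \<and> x *\<^sub>R w1 + (F x + y) *\<^sub>R w2 \<in> E}"

definition rect_ratios :: "(real^2) set \<Rightarrow> real \<Rightarrow> real \<Rightarrow> real \<Rightarrow> real set" where
  "rect_ratios E e r M =
     {measure lebesgue (strip_hits E e w1 w2 F a b) / (b - a)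
       | w1 w2 F a b. orthonormal2 w1 w2 \<and> M-lipschitz_on UNIV F \<and> b - a \<ge> r}"

lemma rect_const_eq_Sup: "rect_const E e r M = Sup (rect_ratios E e r M)"
  unfolding rect_const_def rect_ratios_def strip_hits_def by simp

lemma orthonormal2_norm_sq:
  assumes "orthonormal2 w1 w2"
  shows "(norm (x *\<^sub>R w1 + z *\<^sub>R w2))\<^sup>2 = x\<^sup>2 + z\<^sup>2"
proof -
  have "inner w1 w1 = 1" "inner w2 w2 = 1" "inner w1 w2 = 0" "inner w2 w1 = 0"
    using assms unfolding orthonormal2_def by (auto simp: inner_commute dot_square_norm)
  then show ?thesis
    unfolding power2_norm_eq_inner
    by (simp add: inner_add_left inner_add_right power2_eq_square)
qed

lemma orthonormal2_abs_le_norm: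
  assumes "orthonormal2 w1 w2"
  shows "\<bar>x\<bar> \<le> norm (x *\<^sub>R w1 + z *\<^sub>R w2)" and "\<bar>z\<bar> \<le> norm (x *\<^sub>R w1 + z *\<^sub>R w2)"
  by (rule power2_le_imp_le; simp add: orthonormal2_norm_sq[OF assms])+

lemma orthonormal2_axis: "orthonormal2 (axis 1 1) (axis 2 1)"
  unfolding orthonormal2_def by (simp add: inner_axis_axis)

lemma compact_orthonormal2_pairs: "compact {(w1, w2). orthonormal2 w1 w2}"
proof -
  have "{(w1, w2). orthonormal2 w1 w2} =
          (sphere 0 1 \<times> sphere 0 1) \<inter> {p. inner (fst p) (snd p) = 0}"
    by (auto simp: orthonormal2_def)
  also have "compact \<dots>"
    by (intro compact_Int_closed compact_Times compact_sphere closed_Collect_eq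
        continuous_intros)
  finally show ?thesis .
qed

lemma orthonormal2_subseq_converges:
  fixes W1 W2 :: "nat \<Rightarrow> real^2"
  assumes "\<And>n. orthonormal2 (W1 n) (W2 n)"
  obtains k w1 w2 where "strict_mono k" "orthonormal2 w1 w2"
    "(\<lambda>n. W1 (k n)) \<longlonglongrightarrow> w1" "(\<lambda>n. W2 (k n)) \<longlonglongrightarrow> w2"
proof -
  define P where "P n = (W1 n, W2 n)" for n
  have in_pairs: "\<forall>n. P n \<in> {(w1, w2). orthonormal2 w1 w2}" using assms by (simp add: P_def)
  obtain p k where p: "p \<in> {(w1, w2). orthonormal2 w1 w2}"
    and "strict_mono k" and lim: "(P \<circ> k) \<longlonglongrightarrow> p"
    using compact_imp_seq_compact[OF compact_orthonormal2_pairs] in_pairs by (rule seq_compactE)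
  show ?thesis
  proof
    show "orthonormal2 (fst p) (snd p)" using p by auto
    show "(\<lambda>n. W1 (k n)) \<longlonglongrightarrow> fst p" using tendsto_fst[OF lim] by (simp add: P_def o_def)
    show "(\<lambda>n. W2 (k n)) \<longlonglongrightarrow> snd p" using tendsto_snd[OF lim] by (simp add: P_def o_def)
  qed fact
qed

lemma strip_hits_subset_Icc: "strip_hits E e w1 w2 F a b \<subseteq> {a..b}"
  by (auto simp: strip_hits_def)

lemma compact_strip_hits:
  assumes "continuous_on UNIV F" and "closed E"
  shows "compact (strip_hits E e w1 w2 F a b)"
proof -
  let ?f = "\<lambda>p::real \<times> real. fst p *\<^sub>R w1 + (F (fst p) + snd p) *\<^sub>R w2"
  have "continuous_on UNIV ?f"
    by (intro continuous_intros continuous_on_compose2[OF assms(1)]) auto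
  then have "closed (?f -` E)" by (rule closed_vimage[OF assms(2)])
  then have "compact (({a..b} \<times> {-e..e}) \<inter> ?f -` E)"
    by (rule compact_Int_closed[OF compact_Times[OF compact_Icc compact_Icc]])
  then have "compact (fst ` (({a..b} \<times> {-e..e}) \<inter> ?f -` E))"
    by (auto intro!: compact_continuous_image continuous_intros)
  also have "fst ` (({a..b} \<times> {-e..e}) \<inter> ?f -` E) = strip_hits E e w1 w2 F a b"
    unfolding strip_hits_def by (force simp: image_iff)
  finally show ?thesis .
qed

lemma measure_strip_hits_le:
  assumes "a \<le> b"
  shows "measure lebesgue (strip_hits E e w1 w2 F a b) \<le> b - a"
proof (cases "strip_hits E e w1 w2 F a b \<in> sets lebesgue")
  case True
  then have "measure lebesgue (strip_hits E e w1 w2 F a b) \<le> measure lebesgue {a..b}"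
    by (intro measure_mono_fmeasurable strip_hits_subset_Icc) auto
  with assms show ?thesis by simp
qed (use assms in \<open>simp add: measure_notin_sets\<close>)

lemma rect_ratios_bdd_above: "r > 0 \<Longrightarrow> bdd_above (rect_ratios E e r M)"
  unfolding rect_ratios_def bdd_above_def
  by (rule exI[of _ 1]) (auto simp: measure_strip_hits_le)

lemma rect_ratios_nonempty:
  assumes "M \<ge> 0"
  shows "rect_ratios E e r M \<noteq> {}"
proof -
  have "M-lipschitz_on UNIV (\<lambda>x. 0::real)"
    using assms by (intro lipschitz_on_mono[OF lipschitz_on_constant]) auto
  then have "measure lebesgue (strip_hits E e (axis 1 1) (axis 2 1) (\<lambda>x. 0) 0 r) / (r - 0)
      \<in> rect_ratios E e r M"
    unfolding rect_ratios_def using orthonormal2_axis by fastforce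
  then show ?thesis by blast
qed

lemma rect_const_ge_ratio:
  assumes "orthonormal2 w1 w2" "M-lipschitz_on UNIV F" "r \<le> b - a" "r > 0"
  shows "measure lebesgue (strip_hits E e w1 w2 F a b) / (b - a) \<le> rect_const E e r M"
  unfolding rect_const_eq_Sup
  by (rule cSup_upper[OF _ rect_ratios_bdd_above[OF \<open>r > 0\<close>]])
    (unfold rect_ratios_def mem_Collect_eq, use assms in blast)

lemma rect_const_nonneg:
  assumes "r > 0" "M \<ge> 0"
  shows "0 \<le> rect_const E e r M"
proof -
  obtain z where "z \<in> rect_ratios E e r M" using rect_ratios_nonempty[OF assms(2)] by blast
  moreover from this have "0 \<le> z" using assms(1) by (auto simp: rect_ratios_def)
  ultimately show ?thesis
    unfolding rect_const_eq_Sup by (meson cSup_upper order_trans rect_ratios_bdd_above assms(1))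
qed

lemma rect_const_witness:
  assumes "r > 0" "M \<ge> 0" "c \<ge> 0" "c < rect_const E e r M"
  obtains w1 w2 F a b where "orthonormal2 w1 w2" "M-lipschitz_on UNIV F"
    "c * r \<le> measure lebesgue (strip_hits E e w1 w2 F a b)"
proof -
  obtain z where "z \<in> rect_ratios E e r M" "c < z"
    using assms(4) less_cSup_iff[OF rect_ratios_nonempty[OF assms(2)] rect_ratios_bdd_above[OF assms(1)]]
    by (auto simp: rect_const_eq_Sup)
  then obtain w1 w2 F a b where data: "orthonormal2 w1 w2" "M-lipschitz_on UNIV F" "r \<le> b - a"
    and "c < measure lebesgue (strip_hits E e w1 w2 F a b) / (b - a)"
    unfolding rect_ratios_def by blast
  then have "c * (b - a) < measure lebesgue (strip_hits E e w1 w2 F a b)"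
    using assms(1) by (simp add: pos_less_divide_eq)
  moreover have "c * r \<le> c * (b - a)" using data(3) assms(3) by (intro mult_left_mono)
  ultimately have "c * r \<le> measure lebesgue (strip_hits E e w1 w2 F a b)" by linarith
  with data(1,2) show ?thesis by (rule that)
qed

lemma strip_hits_bounds:
  assumes "orthonormal2 w1 w2" "E \<subseteq> cball 0 B"
    and "x \<in> strip_hits E e w1 w2 F a b"
  shows "\<bar>x\<bar> \<le> B" "\<bar>F x\<bar> \<le> B + e"
proof -
  obtain y where y: "-e \<le> y" "y \<le> e" "x *\<^sub>R w1 + (F x + y) *\<^sub>R w2 \<in> E"
    using assms(3) by (auto simp: strip_hits_def)
  then have "norm (x *\<^sub>R w1 + (F x + y) *\<^sub>R w2) \<le> B" using assms(2) by auto
  then have "\<bar>x\<bar> \<le> B" "\<bar>F x + y\<bar> \<le> B"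
    using orthonormal2_abs_le_norm[OF assms(1)] by (meson order_trans)+
  then show "\<bar>x\<bar> \<le> B" "\<bar>F x\<bar> \<le> B + e" using y(1,2) by linarith+
qed

lemma closed_graph_hits:
  fixes w1 w2 :: "'a::real_normed_vector"
  assumes "continuous_on UNIV F" and "closed E"
  shows "closed {x. x *\<^sub>R w1 + F x *\<^sub>R w2 \<in> E}"
proof -
  have "continuous_on UNIV (\<lambda>x. x *\<^sub>R w1 + F x *\<^sub>R w2)"
    by (intro continuous_on_add continuous_on_scaleR continuous_on_id continuous_on_const assms(1))
  then show ?thesis using closed_vimage[OF assms(2)] by (simp add: vimage_def)
qed

lemma graph_hits_subset_Icc:
  assumes "orthonormal2 w1 w2" "E \<subseteq> cball 0 B"
  shows "{x. x *\<^sub>R w1 + F x *\<^sub>R w2 \<in> E} \<subseteq> {-B..B}"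
proof
  fix x assume "x \<in> {x. x *\<^sub>R w1 + F x *\<^sub>R w2 \<in> E}"
  then have "norm (x *\<^sub>R w1 + F x *\<^sub>R w2) \<le> B" using assms(2) by auto
  then have "\<bar>x\<bar> \<le> B" by (rule order_trans[OF orthonormal2_abs_le_norm(1)[OF assms(1)]])
  then show "x \<in> {-B..B}" by (simp add: abs_le_iff)
qed

lemma graph_hits_measure_le_rect_const:
  assumes "compact E" "orthonormal2 w1 w2" "M-lipschitz_on UNIV F"
    and "E \<subseteq> cball 0 B" "B > 0" "e \<ge> 0"
  shows "measure lebesgue {x. x *\<^sub>R w1 + F x *\<^sub>R w2 \<in> E} / (2 * B) \<le> rect_const E e (2 * B) M"
proof -
  let ?S = "{x. x *\<^sub>R w1 + F x *\<^sub>R w2 \<in> E}"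
  have F: "continuous_on UNIV F" using assms(3) by (rule lipschitz_on_continuous_on)
  have "?S \<subseteq> {-B..B}" using assms(2,4) by (rule graph_hits_subset_Icc)
  then have "?S \<subseteq> strip_hits E e w1 w2 F (-B) B"
    using assms(6)
    by (auto simp: strip_hits_def intro!: exI[of _ 0])
  moreover have "?S \<in> sets lebesgue"
    using closed_graph_hits[OF F compact_imp_closed[OF assms(1)]] by simp
  moreover have "strip_hits E e w1 w2 F (-B) B \<in> fmeasurable lebesgue"
    using compact_strip_hits[OF F compact_imp_closed[OF assms(1)]] by (rule lmeasurable_compact)
  ultimately have "measure lebesgue ?S \<le> measure lebesgue (strip_hits E e w1 w2 F (-B) B)"
    by (rule measure_mono_fmeasurable)
  then have "measure lebesgue ?S / (2 * B) \<le> measure lebesgue (strip_hits E e w1 w2 F (-B) B) / (B - -B)"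
    using assms(5) by (simp add: divide_right_mono)
  also have "\<dots> \<le> rect_const E e (2 * B) M"
    using assms(2,3,5) by (intro rect_const_ge_ratio) auto
  finally show ?thesis .
qed

lemma tendsto_rect_const_imp_purely_unrectifiable:
  assumes "compact E" and lim: "\<forall>r>0. \<forall>M>0. ((\<lambda>\<epsilon>. rect_const E \<epsilon> r M) \<longlongrightarrow> 0) (at_right 0)"
  shows "purely_unrectifiable E"
  unfolding purely_unrectifiable_def
proof (intro allI impI, elim conjE)
  fix w1 w2 L and F :: "real \<Rightarrow> real"
  assume frame: "orthonormal2 w1 w2" and F: "L-lipschitz_on UNIV F"
  let ?S = "{x. x *\<^sub>R w1 + F x *\<^sub>R w2 \<in> E}"
  obtain B where B: "B > 0" "E \<subseteq> cball 0 B"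
    using compact_imp_bounded[OF assms(1)] by (force simp: bounded_pos subset_iff)
  have F': "(L + 1)-lipschitz_on UNIV F" by (rule lipschitz_on_mono[OF F]) auto
  have "L + 1 > 0" using lipschitz_on_nonneg[OF F] by simp
  then have "((\<lambda>\<epsilon>. rect_const E \<epsilon> (2 * B) (L + 1)) \<longlongrightarrow> 0) (at_right 0)"
    using lim B(1) by simp
  moreover have "eventually (\<lambda>\<epsilon>. measure lebesgue ?S / (2 * B) \<le> rect_const E \<epsilon> (2 * B) (L + 1)) (at_right 0)"
    using eventually_at_right_less[of 0]
    by eventually_elim (use graph_hits_measure_le_rect_const[OF assms(1) frame F' B(2,1)] in auto)
  ultimately have "measure lebesgue ?S / (2 * B) \<le> 0"
    by (rule tendsto_lowerbound) simp
  then have "measure lebesgue ?S = 0"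
    using B(1) measure_nonneg[of lebesgue ?S] by (simp add: divide_le_0_iff)
  moreover have "?S \<in> fmeasurable lebesgue"
  proof (rule fmeasurableI2)
    show "?S \<subseteq> {-B..B}" using frame B(2) by (rule graph_hits_subset_Icc)
    show "?S \<in> sets lebesgue"
      using closed_graph_hits[OF lipschitz_on_continuous_on[OF F] compact_imp_closed[OF assms(1)]]
      by simp
  qed simp
  ultimately show "?S \<in> null_sets lebesgue"
    by (auto simp: emeasure_eq_measure2)
qed

lemma closed_contains_limit_of_near_points:
  fixes P :: "nat \<Rightarrow> 'a::real_normed_vector"
  assumes "closed E" "P \<longlonglongrightarrow> q" "eps \<longlonglongrightarrow> 0"
    and near: "\<exists>\<^sub>F n in sequentially. \<exists>v. norm v \<le> eps n \<and> P n + v \<in> E"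
  shows "q \<in> E"
proof (rule ccontr)
  assume "q \<notin> E"
  then obtain d where "d > 0" and ball: "ball q d \<subseteq> - E"
    using assms(1) open_contains_ball by (metis Compl_iff open_Compl)
  have "eventually (\<lambda>n. dist (P n) q < d / 2) sequentially"
    using tendstoD[OF assms(2), of "d / 2"] \<open>d > 0\<close> by simp
  moreover have "eventually (\<lambda>n. eps n < d / 2) sequentially"
    using order_tendstoD(2)[OF assms(3), of "d / 2"] \<open>d > 0\<close> by simp
  ultimately have "eventually (\<lambda>n. \<not> (\<exists>v. norm v \<le> eps n \<and> P n + v \<in> E)) sequentially"
  proof eventually_elim
    case (elim n)
    have "dist (P n + v) q < d" if "norm v \<le> eps n" for v
      using elim that norm_triangle_ineq[of "P n - q" v] by (simp add: dist_norm algebra_simps)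
    then show ?case using ball by (fastforce simp: dist_commute subset_iff)
  qed
  with near show False by (simp add: frequently_def)
qed

lemma measure_limsup_ge:
  assumes "\<And>n. A n \<in> sets M" "\<And>n. A n \<subseteq> S" "S \<in> fmeasurable M"
    and "\<And>n. c \<le> measure M (A n)"
  shows "c \<le> measure M (limsup A)"
proof -
  define U where "U N = (\<Union>n\<in>{N..}. A n)" for N
  have U: "U N \<in> fmeasurable M" for N
    unfolding U_def using assms(1-3) by (intro fmeasurableI2[OF assms(3)]) auto
  have "(\<lambda>N. measure M (U N)) \<longlonglongrightarrow> measure M (\<Inter>N. U N)"
  proof (rule Lim_measure_decseq)
    show "range U \<subseteq> sets M" using U by auto
    show "decseq U" unfolding decseq_def U_def by (intro allI impI UN_mono) auto
    show "emeasure M (U N) \<noteq> \<infinity>" for N using U[of N] by (auto simp: fmeasurable_def)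
  qed
  moreover have "c \<le> measure M (U N)" for N
    using assms(4)[of N] measure_mono_fmeasurable[OF _ assms(1) U, of N] by (force simp: U_def)
  ultimately have "c \<le> measure M (\<Inter>N. U N)" by (intro LIMSEQ_le_const) auto
  then show ?thesis by (simp add: limsup_INF_SUP U_def)
qed

lemma lipschitz_extension_of_pointwise_limit:
  fixes F :: "nat \<Rightarrow> real \<Rightarrow> real"
  assumes lip: "\<And>n. M-lipschitz_on UNIV (F n)"
    and lim: "\<And>x. x \<in> {a..b} \<Longrightarrow> (\<lambda>n. F n x) \<longlonglongrightarrow> g x" and "a \<le> b"
  obtains G where "M-lipschitz_on UNIV G" "\<And>x. x \<in> {a..b} \<Longrightarrow> G x = g x"
proof -
  have M: "M \<ge> 0" using lipschitz_on_nonneg[OF lip] .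
  have g_lip: "\<bar>g x - g y\<bar> \<le> M * \<bar>x - y\<bar>" if "x \<in> {a..b}" "y \<in> {a..b}" for x y
  proof (rule LIMSEQ_le_const2)
    show "(\<lambda>n. \<bar>F n x - F n y\<bar>) \<longlonglongrightarrow> \<bar>g x - g y\<bar>"
      by (intro tendsto_intros lim that)
    show "\<exists>N. \<forall>n\<ge>N. \<bar>F n x - F n y\<bar> \<le> M * \<bar>x - y\<bar>"
      using lipschitz_onD[OF lip] by (auto simp: dist_real_def)
  qed
  define clamp where "clamp x = max a (min b x)" for x
  have clamp: "clamp x \<in> {a..b}" "\<bar>clamp x - clamp y\<bar> \<le> \<bar>x - y\<bar>" for x y
    using \<open>a \<le> b\<close> by (auto simp: clamp_def abs_le_iff)
  show ?thesis
  proof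
    show "M-lipschitz_on UNIV (g \<circ> clamp)"
    proof (rule lipschitz_onI)
      fix x y
      have "\<bar>g (clamp x) - g (clamp y)\<bar> \<le> M * \<bar>clamp x - clamp y\<bar>" by (rule g_lip[OF clamp(1,1)])
      also have "\<dots> \<le> M * \<bar>x - y\<bar>" using clamp(2) M by (rule mult_left_mono)
      finally show "dist ((g \<circ> clamp) x) ((g \<circ> clamp) y) \<le> M * dist x y"
        by (simp add: dist_real_def)
    qed (rule M)
    show "(g \<circ> clamp) x = g x" if "x \<in> {a..b}" for x using that by (simp add: clamp_def)
  qed
qed

lemma lipschitz_subseq_converges:
  fixes F :: "nat \<Rightarrow> real \<Rightarrow> real"
  assumes lip: "\<And>n. M-lipschitz_on UNIV (F n)" and bound: "\<And>n x. x \<in> {a..b} \<Longrightarrow> \<bar>F n x\<bar> \<le> C"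
    and "a \<le> b"
  obtains k G where "strict_mono k" "M-lipschitz_on UNIV G"
    "\<And>x. x \<in> {a..b} \<Longrightarrow> (\<lambda>n. F (k n) x) \<longlonglongrightarrow> G x"
proof -
  have M: "M \<ge> 0" using lipschitz_on_nonneg[OF lip] .
  have bound': "norm (F n x) \<le> C" if "x \<in> {a..b}" for n x using bound[OF that] by simp
  have equicont: "\<exists>d>0. \<forall>n y. y \<in> {a..b} \<and> norm (x - y) < d \<longrightarrow> norm (F n x - F n y) < e"
    if "x \<in> {a..b}" "e > 0" for x e
  proof (intro exI[of _ "e / (M + 1)"] conjI allI impI)
    show "e / (M + 1) > 0" using that(2) M by simp
    fix n y assume "y \<in> {a..b} \<and> norm (x - y) < e / (M + 1)"
    then have "(M + 1) * norm (x - y) < e" using M by (simp add: pos_less_divide_eq mult.commute)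
    moreover have "norm (F n x - F n y) \<le> M * norm (x - y)"
      using lipschitz_onD[OF lip] by (simp add: dist_norm)
    moreover have "M * norm (x - y) \<le> (M + 1) * norm (x - y)" by (simp add: algebra_simps)
    ultimately show "norm (F n x - F n y) < e" by linarith
  qed
  obtain g k where "continuous_on {a..b} g" "strict_mono k"
    and unif: "\<And>e. 0 < e \<Longrightarrow> \<exists>N. \<forall>(n::nat) x. n \<ge> N \<and> x \<in> {a..b} \<longrightarrow> norm (F (k n) x - g x) < e"
    using Arzela_Ascoli[OF compact_Icc bound' equicont] by blast
  have lim: "(\<lambda>n. F (k n) x) \<longlonglongrightarrow> g x" if "x \<in> {a..b}" for x
    unfolding lim_sequentially dist_norm using unif that by meson
  obtain G where "M-lipschitz_on UNIV G" "\<And>x. x \<in> {a..b} \<Longrightarrow> G x = g x"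
    using lipschitz_extension_of_pointwise_limit[OF lip lim \<open>a \<le> b\<close>] by blast
  with \<open>strict_mono k\<close> lim show ?thesis by (intro that) auto
qed

lemma limsup_strip_hits_subset_graph:
  fixes W1 W2 :: "nat \<Rightarrow> real^2" and F :: "nat \<Rightarrow> real \<Rightarrow> real"
  assumes "closed E" "W1 \<longlonglongrightarrow> w1" "W2 \<longlonglongrightarrow> w2" "\<And>n. norm (W2 n) = 1" "eps \<longlonglongrightarrow> 0"
    and lim: "\<And>x. x \<in> S \<Longrightarrow> (\<lambda>n. F n x) \<longlonglongrightarrow> G x"
    and sub: "\<And>n. strip_hits E (eps n) (W1 n) (W2 n) (F n) (a n) (b n) \<subseteq> S"
  shows "limsup (\<lambda>n. strip_hits E (eps n) (W1 n) (W2 n) (F n) (a n) (b n))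
           \<subseteq> {x. x *\<^sub>R w1 + G x *\<^sub>R w2 \<in> E}"
proof
  fix x assume "x \<in> limsup (\<lambda>n. strip_hits E (eps n) (W1 n) (W2 n) (F n) (a n) (b n))"
  then have freq: "\<exists>\<^sub>F n in sequentially. x \<in> strip_hits E (eps n) (W1 n) (W2 n) (F n) (a n) (b n)"
    by (simp add: mem_limsup_iff)
  then have "x \<in> S" using sub by (blast dest: frequently_ex)
  have "x *\<^sub>R w1 + G x *\<^sub>R w2 \<in> E"
  proof (rule closed_contains_limit_of_near_points[OF assms(1) _ assms(5)])
    show "(\<lambda>n. x *\<^sub>R W1 n + F n x *\<^sub>R W2 n) \<longlonglongrightarrow> x *\<^sub>R w1 + G x *\<^sub>R w2"
      by (intro tendsto_intros assms(2,3) lim \<open>x \<in> S\<close>)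
    show "\<exists>\<^sub>F n in sequentially. \<exists>v. norm v \<le> eps n \<and> x *\<^sub>R W1 n + F n x *\<^sub>R W2 n + v \<in> E"
      using freq
    proof (rule frequently_elim1)
      fix n assume "x \<in> strip_hits E (eps n) (W1 n) (W2 n) (F n) (a n) (b n)"
      then obtain y where "-eps n \<le> y" "y \<le> eps n" "x *\<^sub>R W1 n + (F n x + y) *\<^sub>R W2 n \<in> E"
        by (auto simp: strip_hits_def)
      then show "\<exists>v. norm v \<le> eps n \<and> x *\<^sub>R W1 n + F n x *\<^sub>R W2 n + v \<in> E"
        using assms(4) by (intro exI[of _ "y *\<^sub>R W2 n"]) (simp add: scaleR_add_left add.assoc abs_le_iff)
    qed
  qed
  then show "x \<in> {x. x *\<^sub>R w1 + G x *\<^sub>R w2 \<in> E}" by simp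
qed

lemma lipschitz_bound_on_Icc_from_strip_hits:
  assumes "orthonormal2 w1 w2" "E \<subseteq> cball 0 B" "M-lipschitz_on UNIV F"
    and "strip_hits E e w1 w2 F a b \<noteq> {}" "x \<in> {-B..B}"
  shows "\<bar>F x\<bar> \<le> B + e + 2 * B * M"
proof -
  obtain x0 where "x0 \<in> strip_hits E e w1 w2 F a b" using assms(4) by blast
  then have x0: "\<bar>x0\<bar> \<le> B" "\<bar>F x0\<bar> \<le> B + e" using strip_hits_bounds[OF assms(1,2)] by auto
  have "\<bar>F x - F x0\<bar> \<le> M * \<bar>x - x0\<bar>"
    using lipschitz_onD[OF assms(3)] by (simp add: dist_real_def)
  also have "\<dots> \<le> M * (2 * B)"
    using assms(5) x0(1) lipschitz_on_nonneg[OF assms(3)] by (intro mult_left_mono) auto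
  finally show ?thesis using x0(2) by (simp add: algebra_simps)
qed

lemma limsup_strip_hits_subseq_in_graph:
  fixes W1 W2 :: "nat \<Rightarrow> real^2" and F :: "nat \<Rightarrow> real \<Rightarrow> real"
  assumes "compact E" "eps \<longlonglongrightarrow> 0" and frame: "\<And>n. orthonormal2 (W1 n) (W2 n)"
    and lip: "\<And>n. M-lipschitz_on UNIV (F n)"
    and nonempty: "\<And>n. strip_hits E (eps n) (W1 n) (W2 n) (F n) (a n) (b n) \<noteq> {}"
  obtains k w1 w2 G where "orthonormal2 w1 w2" "M-lipschitz_on UNIV G"
    "limsup (\<lambda>n. strip_hits E (eps (k n)) (W1 (k n)) (W2 (k n)) (F (k n)) (a (k n)) (b (k n)))
       \<subseteq> {x. x *\<^sub>R w1 + G x *\<^sub>R w2 \<in> E}"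
proof -
  obtain B where "B > 0" and B: "E \<subseteq> cball 0 B"
    using compact_imp_bounded[OF assms(1)] by (force simp: bounded_pos subset_iff)
  obtain K where K: "\<And>n. norm (eps n) \<le> K"
    using convergent_imp_Bseq[OF convergentI[OF assms(2)]] by (blast dest: BseqD)
  have F_bound: "\<bar>F n x\<bar> \<le> B + K + 2 * B * M" if "x \<in> {-B..B}" for n x
  proof -
    have "\<bar>F n x\<bar> \<le> B + eps n + 2 * B * M"
      by (rule lipschitz_bound_on_Icc_from_strip_hits[OF frame B lip nonempty that])
    moreover have "eps n \<le> K" using K[of n] by simp
    ultimately show ?thesis by linarith
  qed
  obtain k1 w1 w2 where "orthonormal2 w1 w2" and k1: "strict_mono k1"
    and W1: "(\<lambda>n. W1 (k1 n)) \<longlonglongrightarrow> w1" and W2: "(\<lambda>n. W2 (k1 n)) \<longlonglongrightarrow> w2"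
    by (rule orthonormal2_subseq_converges[OF frame])
  obtain k2 G where k2: "strict_mono k2" and "M-lipschitz_on UNIV G"
    and G: "\<And>x. x \<in> {-B..B} \<Longrightarrow> (\<lambda>n. F (k1 (k2 n)) x) \<longlonglongrightarrow> G x"
    by (rule lipschitz_subseq_converges[where F="\<lambda>n. F (k1 n)" and a="-B" and b=B
          and C="B + K + 2 * B * M"]) (use lip F_bound \<open>B > 0\<close> in auto)
  have lim: "(\<lambda>n. W1 (k1 (k2 n))) \<longlonglongrightarrow> w1" "(\<lambda>n. W2 (k1 (k2 n))) \<longlonglongrightarrow> w2"
      "(\<lambda>n. eps (k1 (k2 n))) \<longlonglongrightarrow> 0"
    using LIMSEQ_subseq_LIMSEQ[OF W1 k2] LIMSEQ_subseq_LIMSEQ[OF W2 k2]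
      LIMSEQ_subseq_LIMSEQ[OF assms(2) strict_mono_o[OF k1 k2]] by (simp_all add: o_def)
  have "limsup (\<lambda>n. strip_hits E (eps (k1 (k2 n))) (W1 (k1 (k2 n))) (W2 (k1 (k2 n)))
      (F (k1 (k2 n))) (a (k1 (k2 n))) (b (k1 (k2 n)))) \<subseteq> {x. x *\<^sub>R w1 + G x *\<^sub>R w2 \<in> E}"
  proof (rule limsup_strip_hits_subset_graph[where S="{-B..B}", OF compact_imp_closed[OF assms(1)] lim(1,2) _ lim(3) G])
    show "norm (W2 (k1 (k2 n))) = 1" for n using frame by (simp add: orthonormal2_def)
    show "strip_hits E (eps (k1 (k2 n))) (W1 (k1 (k2 n))) (W2 (k1 (k2 n))) (F (k1 (k2 n)))
        (a (k1 (k2 n))) (b (k1 (k2 n))) \<subseteq> {-B..B}" for n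
      using strip_hits_bounds(1)[OF frame B] by (force simp: abs_le_iff)
  qed
  then show ?thesis
    by (rule that[where k="\<lambda>n. k1 (k2 n)", OF \<open>orthonormal2 w1 w2\<close> \<open>M-lipschitz_on UNIV G\<close>])
qed

lemma purely_unrectifiable_rect_const_not_bounded_below:
  assumes "compact E" "purely_unrectifiable E" "r > 0" "M \<ge> 0" "\<delta> > 0" "eps \<longlonglongrightarrow> 0"
  shows "\<not> (\<forall>n. \<delta> \<le> rect_const E (eps n) r M)"
proof
  assume above: "\<forall>n. \<delta> \<le> rect_const E (eps n) r M"
  have "\<exists>w1 w2 F a b. orthonormal2 w1 w2 \<and> M-lipschitz_on UNIV F \<and>
      \<delta> / 2 * r \<le> measure lebesgue (strip_hits E (eps n) w1 w2 F a b)" for n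
  proof -
    have "0 \<le> \<delta> / 2" "\<delta> / 2 < rect_const E (eps n) r M"
      using above[rule_format, of n] assms(5) by simp_all
    then obtain w1 w2 F a b where "orthonormal2 w1 w2" "M-lipschitz_on UNIV F"
      "\<delta> / 2 * r \<le> measure lebesgue (strip_hits E (eps n) w1 w2 F a b)"
      by (rule rect_const_witness[OF assms(3,4)])
    then show ?thesis by blast
  qed
  then obtain W1 W2 F a b where frame: "\<And>n. orthonormal2 (W1 n) (W2 n)"
    and lip: "\<And>n. M-lipschitz_on UNIV (F n)"
    and big: "\<And>n. \<delta> / 2 * r \<le> measure lebesgue (strip_hits E (eps n) (W1 n) (W2 n) (F n) (a n) (b n))"
    by metis
  define A where "A n = strip_hits E (eps n) (W1 n) (W2 n) (F n) (a n) (b n)" for n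
  have pos: "\<delta> / 2 * r > 0" using assms(3,5) by simp
  then have "A n \<noteq> {}" for n using big[of n] by (auto simp: A_def)
  then obtain k w1 w2 G where "orthonormal2 w1 w2" "M-lipschitz_on UNIV G"
    and graph: "limsup (A \<circ> k) \<subseteq> {x. x *\<^sub>R w1 + G x *\<^sub>R w2 \<in> E}"
    unfolding A_def o_def by (rule limsup_strip_hits_subseq_in_graph[OF assms(1,6) frame lip])
  obtain B where B: "E \<subseteq> cball 0 B"
    using compact_imp_bounded[OF assms(1)] by (force simp: bounded_pos subset_iff)
  have A_meas: "A n \<in> sets lebesgue" for n
    unfolding A_def using lipschitz_on_continuous_on[OF lip]
    by (intro fmeasurableD lmeasurable_compact compact_strip_hits compact_imp_closed assms(1))
  have "{x. x *\<^sub>R w1 + G x *\<^sub>R w2 \<in> E} \<in> null_sets lebesgue"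
    using assms(2) \<open>orthonormal2 w1 w2\<close> \<open>M-lipschitz_on UNIV G\<close>
    unfolding purely_unrectifiable_def by blast
  moreover have "limsup (A \<circ> k) \<in> sets lebesgue"
    using A_meas by (intro measurable_limsup) simp
  ultimately have "limsup (A \<circ> k) \<in> null_sets lebesgue"
    using graph by (rule null_sets_subset)
  moreover have "\<delta> / 2 * r \<le> measure lebesgue (limsup (A \<circ> k))"
  proof (rule measure_limsup_ge[where S="{-B..B}"])
    show "(A \<circ> k) n \<subseteq> {-B..B}" for n
      using strip_hits_bounds(1)[OF frame B] by (force simp: A_def abs_le_iff)
  qed (use A_meas big in \<open>simp_all add: A_def\<close>)
  ultimately show False using pos by (simp add: measure_eq_0_null_sets)
qed

lemma not_eventually_at_right_imp_seq:
  fixes a :: real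
  assumes "\<not> eventually P (at_right a)"
  obtains s where "s \<longlonglongrightarrow> a" "\<And>n. \<not> P (s n)"
proof -
  have "\<exists>x. a < x \<and> x < a + inverse (real (Suc n)) \<and> \<not> P x" for n
  proof -
    have "a < a + inverse (real (Suc n))" by simp
    then show ?thesis using assms unfolding eventually_at_right_field by blast
  qed
  then obtain s where s: "\<And>n. a < s n" "\<And>n. s n < a + inverse (real (Suc n))" "\<And>n. \<not> P (s n)"
    by metis
  have lim: "s \<longlonglongrightarrow> a"
  proof (rule tendsto_sandwich[of "\<lambda>n. a" _ _ "\<lambda>n. a + inverse (real (Suc n))"])
    show "(\<lambda>n. a + inverse (real (Suc n))) \<longlonglongrightarrow> a"
      using tendsto_add[OF tendsto_const LIMSEQ_inverse_real_of_nat] by simp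
  qed (use s in \<open>auto intro!: always_eventually less_imp_le\<close>)
  show ?thesis by (rule that[OF lim s(3)])
qed

lemma purely_unrectifiable_imp_rect_const_tendsto:
  assumes "compact E" "purely_unrectifiable E" "r > 0" "M \<ge> 0"
  shows "((\<lambda>\<epsilon>. rect_const E \<epsilon> r M) \<longlongrightarrow> 0) (at_right 0)"
proof (rule order_tendstoI)
  show "eventually (\<lambda>\<epsilon>. c < rect_const E \<epsilon> r M) (at_right 0)" if "c < 0" for c
    using less_le_trans[OF that rect_const_nonneg[OF assms(3,4)]] by (simp add: always_eventually)
  show "eventually (\<lambda>\<epsilon>. rect_const E \<epsilon> r M < \<delta>) (at_right 0)" if "\<delta> > 0" for \<delta>
  proof (rule ccontr)
    assume "\<not> eventually (\<lambda>\<epsilon>. rect_const E \<epsilon> r M < \<delta>) (at_right 0)"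
    then obtain eps where "eps \<longlonglongrightarrow> 0" "\<And>n. \<delta> \<le> rect_const E (eps n) r M"
      by (rule not_eventually_at_right_imp_seq) (simp add: not_less)
    then show False using purely_unrectifiable_rect_const_not_bounded_below[OF assms that] by blast
  qed
qed

theorem proposition1p9:
  fixes E :: "(real^2) set"
  assumes "compact E"
  shows "purely_unrectifiable E \<longleftrightarrow>
           (\<forall>r>0. \<forall>M>0. ((\<lambda>\<epsilon>. rect_const E \<epsilon> r M) \<longlongrightarrow> 0) (at_right 0))"
  using purely_unrectifiable_imp_rect_const_tendsto[OF assms]
    tendsto_rect_const_imp_purely_unrectifiable[OF assms] by auto

end
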